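(* Let the filtered space and outer-measure notation be as in the context. Let $I_0\in\mathscr D$ and let $h$ be a positive function on $I_0$ with $h,h^{-1}\in L^1(I_0,\nu)$. Define $H$ on $\mathscr D$ by $H(I)=1/\langle h^{-1}\rangle_I$ if $I\in\mathscr D(I_0)$ and $H(I)=0$ otherwise. Then $H\in L^1(\mathscr D,S^\infty)$ and $$\|H\|_{L^1(\mathscr D,S^\infty)}\le 2\|h\|_{L^1(\nu)} .$$
   Context: $(\mathcal X,\mathfrak S,\nu)$ is a $\sigma$-finite measure space with a filtration $(\mathfrak S_n)_{n\in\mathbb Z}$ of atomic $\sigma$-algebras, $\mathfrak S_n\subset\mathfrak S_{n+1}$; $\mathscr D_n$ is the countable disjoint family of atoms (of positive measure) of $\mathfrak S_n$ and $\mathscr D=\bigcup_n\mathscr D_n$; $\mathscr D(I)=\{I'\in\mathscr D:I'\subset I\}$; $|I|=\nu(I)$, $\langle f\rangle_I=|I|^{-1}\int_I f\,d\nu$. Outer measure: $\nu^*(\mathscr D(I))=\nu(I)$ for $I\in\mathscr D$, and for $\mathcal A\subset\mathscr D$, $\nu^*(\mathcal A)=\inf\sum_{I\in\mathcal K}\nu(I)$ over all $\mathcal K\subset\mathscr D$ with $\mathcal A\subset\bigcup_{I\in\mathcal K}\mathscr D(I)$. For $F:\mathscr D\to\mathbb C$, the size is $S^\infty F(\mathscr D(I))=\sup_{I'\in\mathscr D(I)}|F(I')|$. For $\lambda>0$, $\nu^*(S^\infty F>\lambda)=\inf\{\nu^*(\mathcal G):\mathcal G\subset\mathscr D,\ S^\infty(F\mathbf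 1_{\mathscr D\setminus\mathcal G})(\mathscr D(I))\le\lambda\ \forall I\in\mathscr D\}$, and $\|F\|_{L^p(\mathscr D,S^\infty)}=\big(p\int_0^\infty\lambda^{p-1}\nu^*(S^\infty F>\lambda)\,d\lambda\big)^{1/p}$; $L^p(\mathscr D,S^\infty)$ is the set of $F$ with finite norm. *)

theory Defs
  imports "HOL-Analysis.Analysis"
begin

definition is_atom :: "'a set set \<Rightarrow> 'a set \<Rightarrow> bool" where
  "is_atom S A \<longleftrightarrow> A \<in> S \<and> A \<noteq> {} \<and> (\<forall>B\<in>S. B \<subseteq> A \<longrightarrow> B = {} \<or> B = A)"

definition atomic_sigma :: "'a measure \<Rightarrow> 'a set set \<Rightarrow> bool" where
  "atomic_sigma M S \<longleftrightarrow> sigma_algebra (space M) S \<and> S \<subseteq> sets M \<and>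
     (\<forall>x\<in>space M. \<exists>A. is_atom S A \<and> x \<in> A)"

definition atoms :: "'a measure \<Rightarrow> (int \<Rightarrow> 'a set set) \<Rightarrow> int \<Rightarrow> 'a set set" where
  "atoms M S n = {A. is_atom (S n) A \<and> emeasure M A > 0}"

text \<open>Standing assumptions: sigma-finite measure space, filtration of atomic sigma-algebras
  indexed by the integers, countably many atoms of positive measure at each level,
  each of finite measure (so that averages make sense).\<close>
definition atomic_filtration :: "'a measure \<Rightarrow> (int \<Rightarrow> 'a set set) \<Rightarrow> bool" where
  "atomic_filtration M S \<longleftrightarrow> sigma_finite_measure M \<and>
     (\<forall>n. atomic_sigma M (S n)) \<and> (\<forall>n. S n \<subseteq> S (n + 1)) \<and>
     (\<forall>n. countable (atoms M S n)) \<and>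
     (\<forall>n. \<forall>I\<in>atoms M S n. emeasure M I < \<infinity>)"

definition dyad :: "'a measure \<Rightarrow> (int \<Rightarrow> 'a set set) \<Rightarrow> 'a set set" where
  "dyad M S = (\<Union>n. atoms M S n)"

definition tree :: "'a measure \<Rightarrow> (int \<Rightarrow> 'a set set) \<Rightarrow> 'a set \<Rightarrow> 'a set set" where
  "tree M S I = {I' \<in> dyad M S. I' \<subseteq> I}"

definition avg :: "'a measure \<Rightarrow> ('a \<Rightarrow> real) \<Rightarrow> 'a set \<Rightarrow> real" where
  "avg M f I = (1 / measure M I) * (LINT x:I|M. f x)"

text \<open>Sum of nonnegative (extended) terms over a possibly infinite family: sup of finite sums.\<close>
definition outer_measure :: "'a measure \<Rightarrow> (int \<Rightarrow> 'a set set) \<Rightarrow> 'a set set \<Rightarrow> ennreal" where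
  "outer_measure M S A =
     (INF K \<in> {K. K \<subseteq> dyad M S \<and> A \<subseteq> (\<Union>I\<in>K. tree M S I)}.
        (SUP K' \<in> {K'. finite K' \<and> K' \<subseteq> K}. \<Sum>I\<in>K'. emeasure M I))"

definition size_inf :: "'a measure \<Rightarrow> (int \<Rightarrow> 'a set set) \<Rightarrow> ('a set \<Rightarrow> complex) \<Rightarrow> 'a set \<Rightarrow> ennreal" where
  "size_inf M S F I = (SUP I' \<in> tree M S I. ennreal (norm (F I')))"

definition superlevel :: "'a measure \<Rightarrow> (int \<Rightarrow> 'a set set) \<Rightarrow> ('a set \<Rightarrow> complex) \<Rightarrow> real \<Rightarrow> ennreal" where
  "superlevel M S F t =
     (INF G \<in> {G. G \<subseteq> dyad M S \<and>
        (\<forall>I\<in>dyad M S. size_inf M S (\<lambda>J. if J \<in> dyad M S - G then F J else 0) I \<le> ennreal t)}.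
        outer_measure M S G)"

definition outer_Lp_integral :: "real \<Rightarrow> 'a measure \<Rightarrow> (int \<Rightarrow> 'a set set) \<Rightarrow> ('a set \<Rightarrow> complex) \<Rightarrow> ennreal" where
  "outer_Lp_integral p M S F =
     (\<integral>\<^sup>+ t. indicator {0<..} t * ennreal (p * t powr (p - 1)) * superlevel M S F t \<partial>lborel)"

definition outer_Lp_norm :: "real \<Rightarrow> 'a measure \<Rightarrow> (int \<Rightarrow> 'a set set) \<Rightarrow> ('a set \<Rightarrow> complex) \<Rightarrow> ennreal" where
  "outer_Lp_norm p M S F =
     (if outer_Lp_integral p M S F = \<infinity> then \<infinity>
      else ennreal (enn2real (outer_Lp_integral p M S F) powr (1 / p)))"

definition outer_Lp :: "real \<Rightarrow> 'a measure \<Rightarrow> (int \<Rightarrow> 'a set set) \<Rightarrow> ('a set \<Rightarrow> complex) set" where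
  "outer_Lp p M S = {F. outer_Lp_norm p M S F < \<infinity>}"

end

theory Submission
  imports Defs
begin

text \<open>Fix \<open>t > 0\<close> and let \<open>G\<close> be the atoms \<open>I \<subseteq> I0\<close> with \<open>1 / \<langle>h\<^sup>-\<^sup>1\<rangle>\<^sub>I > t\<close>.
  Outside \<open>G\<close> the size of \<open>H\<close> is at most \<open>t\<close>, so \<open>\<nu>*(S\<^sup>\<infinity>H > t)\<close> is bounded by the
  total measure of the maximal atoms of \<open>G\<close>, which are pairwise disjoint. On such an atom
  \<open>\<integral>\<^sub>I t/(2h) < |I|/2\<close>, and since \<open>1 \<le> (1 - t/(2h))\<^sub>+ + t/(2h)\<close> pointwise,
  \<open>|I| \<le> 2 \<integral>\<^sub>I (1 - t/(2h))\<^sub>+\<close>. Hence \<open>\<nu>*(S\<^sup>\<infinity>H > t) \<le> 2 \<integral>\<^sub>I\<^sub>0 (1 - t/(2h))\<^sub>+\<close>,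
  and integrating over \<open>t > 0\<close> with Tonelli gives \<open>2 \<integral>\<^sub>I\<^sub>0 h\<close>, because
  \<open>\<integral>\<^sub>0\<^sup>\<infinity> (1 - t/(2c))\<^sub>+ dt = c\<close>.\<close>

lemma atomic_filtration_mono:
  assumes "atomic_filtration M S" "m \<le> n"
  shows "S m \<subseteq> S n"
  using assms(2)
proof (induction n rule: int_ge_induct)
  case (step n)
  then show ?case
    using assms(1) unfolding atomic_filtration_def by blast
qed simp

lemma atomic_filtration_sigma_algebra:
  assumes "atomic_filtration M S"
  shows "sigma_algebra (space M) (S n)"
  using assms unfolding atomic_filtration_def atomic_sigma_def by blast

lemma atomsD:
  assumes "atomic_filtration M S" "I \<in> atoms M S n"
  shows "is_atom (S n) I" "I \<in> sets M" "I \<noteq> {}" "emeasure M I < \<infinity>"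
  using assms unfolding atomic_filtration_def atoms_def is_atom_def atomic_sigma_def by auto

lemma dyadD:
  assumes "atomic_filtration M S" "I \<in> dyad M S"
  shows "I \<in> sets M" "emeasure M I < \<infinity>"
proof -
  obtain n where "I \<in> atoms M S n" using assms(2) unfolding dyad_def by blast
  then show "I \<in> sets M" "emeasure M I < \<infinity>" using atomsD[OF assms(1)] by simp_all
qed

lemma atom_subset_or_disjoint:
  assumes "sigma_algebra \<Omega> A" "is_atom A I" "B \<in> A"
  shows "I \<subseteq> B \<or> I \<inter> B = {}"
proof -
  interpret sigma_algebra \<Omega> A by fact
  have "B \<inter> I \<in> A" using assms(2,3) unfolding is_atom_def by blast
  then have "B \<inter> I = {} \<or> B \<inter> I = I" using assms(2) unfolding is_atom_def by blast
  then show ?thesis by blast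
qed

lemma atoms_nested_or_disjoint:
  assumes af: "atomic_filtration M S" and I: "I \<in> atoms M S n" and J: "J \<in> atoms M S m"
    and "n \<le> m"
  shows "J \<subseteq> I \<or> I \<inter> J = {}"
proof -
  have "I \<in> S m"
    using atomic_filtration_mono[OF af \<open>n \<le> m\<close>] atomsD(1)[OF af I] unfolding is_atom_def by blast
  then have "J \<subseteq> I \<or> J \<inter> I = {}"
    by (rule atom_subset_or_disjoint[OF atomic_filtration_sigma_algebra[OF af] atomsD(1)[OF af J]])
  then show ?thesis by blast
qed

lemma dyad_nested_or_disjoint:
  assumes af: "atomic_filtration M S" and "I \<in> dyad M S" "J \<in> dyad M S"
  shows "I \<subseteq> J \<or> J \<subseteq> I \<or> I \<inter> J = {}"
proof -
  obtain n m where n: "I \<in> atoms M S n" and m: "J \<in> atoms M S m"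
    using assms unfolding dyad_def by blast
  show ?thesis
  proof (cases "n \<le> m")
    case True
    then show ?thesis using atoms_nested_or_disjoint[OF af n m] by blast
  next
    case False
    then have "m \<le> n" by simp
    then show ?thesis using atoms_nested_or_disjoint[OF af m n] by blast
  qed
qed

text \<open>Between the levels of \<open>I0\<close> and of \<open>I\<close>, each level contributes at most one atom
  containing a fixed point of \<open>I\<close>.\<close>
lemma finite_dyad_ancestors:
  assumes af: "atomic_filtration M S" and I0: "I0 \<in> dyad M S" and I: "I \<in> tree M S I0"
  shows "finite {J \<in> tree M S I0. I \<subseteq> J}"
proof -
  obtain n0 where n0: "I0 \<in> atoms M S n0" using I0 unfolding dyad_def by blast
  obtain k where k: "I \<in> atoms M S k" using I unfolding tree_def dyad_def by blast
  obtain x where x: "x \<in> I" using atomsD(3)[OF af k] by blast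
  define atom_at where "atom_at m = (SOME A. is_atom (S m) A \<and> x \<in> A)" for m
  have "{J \<in> tree M S I0. I \<subseteq> J} \<subseteq> {I0, I} \<union> atom_at ` {n0<..<k}"
  proof
    fix J assume "J \<in> {J \<in> tree M S I0. I \<subseteq> J}"
    then obtain m where m: "J \<in> atoms M S m" and "J \<subseteq> I0" "I \<subseteq> J"
      unfolding tree_def dyad_def by blast
    consider "m \<le> n0" | "k \<le> m" | "n0 < m" "m < k" by linarith
    then show "J \<in> {I0, I} \<union> atom_at ` {n0<..<k}"
    proof cases
      case 1
      then have "I0 \<subseteq> J \<or> J \<inter> I0 = {}" by (rule atoms_nested_or_disjoint[OF af m n0])
      then have "J = I0" using atomsD(3)[OF af m] \<open>J \<subseteq> I0\<close> by blast
      then show ?thesis by simp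
    next
      case 2
      then have "J \<subseteq> I \<or> I \<inter> J = {}" by (rule atoms_nested_or_disjoint[OF af k m])
      then have "J = I" using x \<open>I \<subseteq> J\<close> by blast
      then show ?thesis by simp
    next
      case 3
      have J_atom: "is_atom (S m) J \<and> x \<in> J" using atomsD(1)[OF af m] x \<open>I \<subseteq> J\<close> by blast
      then have A_atom: "is_atom (S m) (atom_at m) \<and> x \<in> atom_at m"
        unfolding atom_at_def by (rule someI)
      have sa: "sigma_algebra (space M) (S m)" by (rule atomic_filtration_sigma_algebra[OF af])
      have "atom_at m \<in> S m" using A_atom unfolding is_atom_def by blast
      then have "J \<subseteq> atom_at m"
        using atom_subset_or_disjoint[OF sa] J_atom A_atom by blast
      moreover have "J \<in> S m" using J_atom unfolding is_atom_def by blast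
      then have "atom_at m \<subseteq> J"
        using atom_subset_or_disjoint[OF sa] J_atom A_atom by blast
      ultimately show ?thesis using 3 by auto
    qed
  qed
  then show ?thesis by (rule finite_subset) simp
qed

definition maximal_sets :: "'a set set \<Rightarrow> 'a set set" where
  "maximal_sets G = {J \<in> G. \<forall>J'\<in>G. J \<subseteq> J' \<longrightarrow> J' = J}"

lemma dyad_maximal_cover:
  assumes af: "atomic_filtration M S" and I0: "I0 \<in> dyad M S"
    and G: "G \<subseteq> tree M S I0" and I: "I \<in> G"
  obtains J where "J \<in> maximal_sets G" "I \<subseteq> J"
proof -
  let ?C = "{J \<in> G. I \<subseteq> J}"
  have "finite ?C"
    by (rule finite_subset[OF _ finite_dyad_ancestors[OF af I0, of I]]) (use G I in auto)
  moreover have "?C \<noteq> {}" using I by blast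
  ultimately obtain J where J: "J \<in> ?C" and max: "\<And>J'. J' \<in> ?C \<Longrightarrow> J \<subseteq> J' \<Longrightarrow> J = J'"
    using finite_has_maximal[of ?C] by metis
  have "J \<in> maximal_sets G"
    unfolding maximal_sets_def using J max by fastforce
  then show ?thesis using that J by blast
qed

lemma disjoint_maximal_sets:
  assumes af: "atomic_filtration M S" and "G \<subseteq> dyad M S"
  shows "disjoint (maximal_sets G)"
proof (rule disjointI)
  fix I J assume I: "I \<in> maximal_sets G" and J: "J \<in> maximal_sets G" and "I \<noteq> J"
  then have "\<not> I \<subseteq> J" "\<not> J \<subseteq> I" unfolding maximal_sets_def by blast+
  moreover have "I \<in> dyad M S" "J \<in> dyad M S"
    using I J assms(2) unfolding maximal_sets_def by blast+
  ultimately show "I \<inter> J = {}" using dyad_nested_or_disjoint[OF af] by blast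
qed

lemma superlevel_le_outer_measure:
  assumes "G \<subseteq> dyad M S" "\<And>I. I \<in> dyad M S - G \<Longrightarrow> norm (F I) \<le> t"
  shows "superlevel M S F t \<le> outer_measure M S G"
  unfolding superlevel_def
proof (rule INF_lower, safe)
  fix I
  show "size_inf M S (\<lambda>J. if J \<in> dyad M S - G then F J else 0) I \<le> ennreal t"
    unfolding size_inf_def by (rule SUP_least) (use assms(2) in \<open>auto intro: ennreal_leI\<close>)
qed (use assms(1) in auto)

lemma outer_measure_le_finite_sums:
  assumes "K \<subseteq> dyad M S" "G \<subseteq> (\<Union>I\<in>K. tree M S I)"
  shows "outer_measure M S G \<le> (SUP K' \<in> {K'. finite K' \<and> K' \<subseteq> K}. \<Sum>I\<in>K'. emeasure M I)"
  unfolding outer_measure_def by (rule INF_lower) (use assms in auto)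

lemma superlevel_le_sum_maximal_sets:
  assumes af: "atomic_filtration M S" and I0: "I0 \<in> dyad M S"
    and F: "\<And>I. I \<in> dyad M S - tree M S I0 \<Longrightarrow> norm (F I) \<le> t"
  defines "G \<equiv> {I \<in> tree M S I0. t < norm (F I)}"
  shows "superlevel M S F t \<le> (SUP K \<in> {K. finite K \<and> K \<subseteq> maximal_sets G}. \<Sum>I\<in>K. emeasure M I)"
proof -
  have G_tree: "G \<subseteq> tree M S I0" unfolding G_def by blast
  have tree_dyad: "tree M S J \<subseteq> dyad M S" for J unfolding tree_def by blast
  have "superlevel M S F t \<le> outer_measure M S G"
  proof (rule superlevel_le_outer_measure)
    show "G \<subseteq> dyad M S" using G_tree tree_dyad by blast
  next
    fix I assume "I \<in> dyad M S - G"
    then show "norm (F I) \<le> t" using F unfolding G_def by force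
  qed
  also have "\<dots> \<le> (SUP K \<in> {K. finite K \<and> K \<subseteq> maximal_sets G}. \<Sum>I\<in>K. emeasure M I)"
  proof (rule outer_measure_le_finite_sums)
    show "maximal_sets G \<subseteq> dyad M S"
      using G_tree tree_dyad unfolding maximal_sets_def by blast
    show "G \<subseteq> (\<Union>I\<in>maximal_sets G. tree M S I)"
    proof
      fix I assume "I \<in> G"
      then obtain J where "J \<in> maximal_sets G" "I \<subseteq> J"
        by (rule dyad_maximal_cover[OF af I0 G_tree])
      then show "I \<in> (\<Union>J\<in>maximal_sets G. tree M S J)"
        using \<open>I \<in> G\<close> G_tree unfolding tree_def by blast
    qed
  qed
  finally show ?thesis .
qed

lemma outer_Lp_integral_1:
  "outer_Lp_integral 1 M S F = (\<integral>\<^sup>+t\<in>{0<..}. superlevel M S F t \<partial>lborel)"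
  unfolding outer_Lp_integral_def
  by (rule nn_integral_cong) (simp split: split_indicator)

lemma outer_Lp_1_le:
  assumes "outer_Lp_integral 1 M S F \<le> ennreal c"
  shows "F \<in> outer_Lp 1 M S \<and> outer_Lp_norm 1 M S F \<le> ennreal c"
proof -
  have finite: "outer_Lp_integral 1 M S F < \<infinity>"
    using assms by (simp add: le_less_trans)
  then have "outer_Lp_norm 1 M S F = outer_Lp_integral 1 M S F"
    unfolding outer_Lp_norm_def by (simp add: ennreal_enn2real_if)
  then show ?thesis
    using assms finite unfolding outer_Lp_def by simp
qed

definition ramp :: "real \<Rightarrow> real \<Rightarrow> real" where
  "ramp c t = max 0 (1 - t / (2 * c))"

lemma nn_integral_ramp:
  fixes c :: real
  assumes c: "c > 0"
  shows "(\<integral>\<^sup>+t\<in>{0<..}. ennreal (ramp c t) \<partial>lborel) = ennreal c"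
proof -
  have "(\<integral>\<^sup>+t\<in>{0<..}. ennreal (ramp c t) \<partial>lborel) = (\<integral>\<^sup>+t\<in>{0..2*c}. ennreal (1 - t/(2*c)) \<partial>lborel)"
  proof (rule nn_integral_cong_AE)
    show "AE t in lborel. ennreal (ramp c t) * indicator {0<..} t
                         = ennreal (1 - t/(2*c)) * indicator {0..2*c} t"
      using AE_lborel_singleton[of 0]
    proof eventually_elim
      fix t :: real assume "t \<noteq> 0"
      have "0 \<le> 1 - t/(2*c) \<longleftrightarrow> t \<le> 2*c" using c by (simp add: field_simps)
      then consider "t < 0" | "0 < t" "t \<le> 2*c" | "2*c < t" "1 - t/(2*c) < 0"
        using \<open>t \<noteq> 0\<close> by fastforce
      then show "ennreal (ramp c t) * indicator {0<..} t = ennreal (1 - t/(2*c)) * indicator {0..2*c} t"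
        by cases (simp_all add: ramp_def indicator_def ennreal_neg)
    qed
  qed
  also have "\<dots> = ennreal ((2*c - (2*c)^2/(4*c)) - (0 - 0^2/(4*c)))"
  proof (rule nn_integral_FTC_Icc)
    fix t assume "t \<in> {0..2*c}"
    then show "((\<lambda>t. t - t^2/(4*c)) has_real_derivative 1 - t/(2*c)) (at t)"
      and "0 \<le> 1 - t/(2*c)"
      using c by (auto intro!: derivative_eq_intros simp: field_simps power2_eq_square)
  qed (use c in auto)
  also have "(2*c - (2*c)^2/(4*c)) - (0 - 0^2/(4*c)) = c"
    using c by (simp add: field_simps power2_eq_square)
  finally show ?thesis .
qed

lemma set_borel_measurable_compose_ennreal:
  fixes f :: "'a \<Rightarrow> real" and g :: "real \<Rightarrow> ennreal"
  assumes "set_borel_measurable M A f" "A \<in> sets M" "g \<in> borel_measurable borel"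
  shows "(\<lambda>x. g (f x) * indicator A x) \<in> borel_measurable M"
proof -
  have [measurable]: "(\<lambda>x. indicator A x * f x) \<in> borel_measurable M"
    using assms(1) unfolding set_borel_measurable_def by simp
  have "(\<lambda>x. g (indicator A x * f x) * indicator A x) \<in> borel_measurable M"
    using assms(2,3) by measurable
  then show ?thesis
    by (rule measurable_cong[THEN iffD1, rotated]) (simp split: split_indicator)
qed

lemma set_nn_integral_eq_set_integral:
  fixes f :: "'a \<Rightarrow> real"
  assumes "set_integrable M A f" "\<And>x. x \<in> A \<Longrightarrow> 0 \<le> f x"
  shows "(\<integral>\<^sup>+x\<in>A. ennreal (f x) \<partial>M) = ennreal (LINT x:A|M. f x)"
  unfolding set_lebesgue_integral_def nn_integral_set_ennreal
  using assms unfolding set_integrable_def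
  by (subst nn_integral_eq_integral) (auto simp: mult.commute split: split_indicator)

lemma ennreal_le_twice_if_le_add_half:
  fixes m a :: real and P :: ennreal
  assumes "ennreal m \<le> P + ennreal a" "2 * a \<le> m" "0 \<le> a"
  shows "ennreal m \<le> 2 * P"
proof (cases P)
  case (real r)
  then have "ennreal m \<le> ennreal (r + a)" using assms(1,3) real by (simp add: ennreal_plus)
  then have "m \<le> 2 * r" using assms(2,3) real by (subst (asm) ennreal_le_iff) auto
  then have "ennreal m \<le> ennreal (2 * r)" by (rule ennreal_leI)
  then show ?thesis using real by (simp add: ennreal_mult)
qed (simp add: ennreal_mult_top)

lemma mult_set_integral_le_measure_of_avg:
  assumes "0 \<le> (LINT x:I|M. f x)" "0 < t" "t < \<bar>1 / avg M f I\<bar>"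
  shows "t * (LINT x:I|M. f x) \<le> measure M I"
proof -
  have "t < measure M I / (LINT x:I|M. f x)"
    using assms(1,3) by (simp add: avg_def)
  then show ?thesis
    using assms(1,2) by (cases "(LINT x:I|M. f x) = 0") (auto simp: field_simps)
qed

lemma emeasure_le_twice_ramp_integral:
  assumes I: "I \<in> sets M" "emeasure M I < \<infinity>"
    and pos: "\<forall>x\<in>I. 0 < h x"
    and h_meas: "set_borel_measurable M I h"
    and inv: "set_integrable M I (\<lambda>x. 1 / h x)"
    and t: "0 < t" "t < \<bar>1 / avg M (\<lambda>x. 1 / h x) I\<bar>"
  shows "emeasure M I \<le> 2 * (\<integral>\<^sup>+x\<in>I. ennreal (ramp (h x) t) \<partial>M)"
proof -
  define m where "m = measure M I"
  define A where "A = (LINT x:I|M. 1 / h x)"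
  have em: "emeasure M I = ennreal m"
    using I by (simp add: m_def emeasure_eq_ennreal_measure)
  have A_eq: "(\<integral>\<^sup>+x\<in>I. ennreal (t/2 * (1 / h x)) \<partial>M) = ennreal (t/2 * A)"
  proof -
    have "(\<integral>\<^sup>+x\<in>I. ennreal (t/2 * (1 / h x)) \<partial>M) = ennreal (LINT x:I|M. t/2 * (1 / h x))"
      by (rule set_nn_integral_eq_set_integral[OF set_integrable_mult_right[OF inv]])
         (use pos t(1) in auto)
    also have "(LINT x:I|M. t/2 * (1 / h x)) = t/2 * A"
      unfolding A_def by (rule set_integral_mult_right)
    finally show ?thesis .
  qed
  have "0 \<le> A"
    unfolding A_def set_lebesgue_integral_def
    by (intro integral_nonneg_AE AE_I2) (use pos in \<open>auto split: split_indicator simp: less_imp_le\<close>)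
  then have "2 * (t/2 * A) \<le> m"
    using mult_set_integral_le_measure_of_avg[OF _ t] unfolding A_def m_def by simp
  have pointwise: "ennreal 1 \<le> ennreal (ramp (h x) t) + ennreal (t/2 * (1 / h x))" if "x \<in> I" for x
  proof -
    have "1 \<le> ramp (h x) t + t/2 * (1 / h x)" by (simp add: ramp_def)
    then have "ennreal 1 \<le> ennreal (ramp (h x) t + t/2 * (1 / h x))" by (rule ennreal_leI)
    also have "\<dots> = ennreal (ramp (h x) t) + ennreal (t/2 * (1 / h x))"
      using pos t(1) that by (intro ennreal_plus) (auto simp: ramp_def)
    finally show ?thesis .
  qed
  have inv_meas: "(\<lambda>x. ennreal (t/2 * (1 / h x)) * indicator I x) \<in> borel_measurable M"
    using borel_measurable_integrable[OF inv[unfolded set_integrable_def]] I(1)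
    by (intro set_borel_measurable_compose_ennreal[where g = "\<lambda>r. ennreal (t/2 * r)"])
       (auto simp: set_borel_measurable_def)
  have ramp_meas: "(\<lambda>x. ennreal (ramp (h x) t) * indicator I x) \<in> borel_measurable M"
    by (rule set_borel_measurable_compose_ennreal[OF h_meas I(1)]) (simp add: ramp_def)
  have "emeasure M I = (\<integral>\<^sup>+x\<in>I. ennreal 1 \<partial>M)" using I by simp
  also have "\<dots> \<le> (\<integral>\<^sup>+x\<in>I. ennreal (ramp (h x) t) + ennreal (t/2 * (1 / h x)) \<partial>M)"
    using pointwise by (intro nn_integral_mono) (simp split: split_indicator)
  also have "\<dots> = (\<integral>\<^sup>+x\<in>I. ennreal (ramp (h x) t) \<partial>M) + ennreal (t/2 * A)"
    unfolding A_eq[symmetric] distrib_right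
    by (rule nn_integral_add[OF ramp_meas inv_meas])
  finally show ?thesis
    using ennreal_le_twice_if_le_add_half \<open>2 * (t/2 * A) \<le> m\<close> \<open>0 \<le> A\<close> t(1) em by simp
qed

lemma sum_set_nn_integral_le:
  assumes "finite K" "disjoint K" "\<And>I. I \<in> K \<Longrightarrow> I \<in> sets M" "\<Union>K \<subseteq> A"
    and f: "(\<lambda>x. f x * indicator A x) \<in> borel_measurable M"
  shows "(\<Sum>I\<in>K. \<integral>\<^sup>+x\<in>I. f x \<partial>M) \<le> (\<integral>\<^sup>+x\<in>A. f x \<partial>M)"
proof -
  have indicator_Union: "(\<Sum>I\<in>K. indicator I x) = (indicator (\<Union>K) x :: ennreal)" for x
  proof -
    have "disjoint_family_on (\<lambda>I. I) K"
      using assms(2) by (auto simp: disjoint_family_on_def disjoint_def)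
    then have "(indicator (\<Union>((\<lambda>I. I) ` K)) x :: ennreal) = (\<Sum>I\<in>K. indicator I x)"
      by (rule indicator_UN_disjoint[OF assms(1)])
    then show ?thesis by simp
  qed
  have "(\<Sum>I\<in>K. \<integral>\<^sup>+x\<in>I. f x \<partial>M) = (\<Sum>I\<in>K. \<integral>\<^sup>+x. f x * indicator A x * indicator I x \<partial>M)"
    using assms(4) by (intro sum.cong nn_integral_cong) (auto split: split_indicator)
  also have "\<dots> = (\<integral>\<^sup>+x. f x * indicator A x * (\<Sum>I\<in>K. indicator I x) \<partial>M)"
    using assms(3) f by (subst nn_integral_sum[symmetric]) (auto simp: sum_distrib_left)
  also have "\<dots> \<le> (\<integral>\<^sup>+x\<in>A. f x \<partial>M)"
    unfolding indicator_Union by (intro nn_integral_mono) (simp split: split_indicator)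
  finally show ?thesis .
qed

lemma nn_integral_ramp_layers:
  fixes c :: ennreal
  assumes M: "sigma_finite_measure M" and A: "A \<in> sets M"
    and h_meas: "set_borel_measurable M A h" and pos: "\<forall>x\<in>A. 0 < h x"
  shows "(\<integral>\<^sup>+t\<in>{0<..}. c * (\<integral>\<^sup>+x\<in>A. ennreal (ramp (h x) t) \<partial>M) \<partial>lborel)
       = c * (\<integral>\<^sup>+x\<in>A. ennreal (h x) \<partial>M)"
proof -
  interpret pair_sigma_finite M lborel
    using M by (simp add: pair_sigma_finite_def lborel.sigma_finite_measure_axioms)
  define g where "g x = indicator A x * h x" for x
  have [measurable]: "g \<in> borel_measurable M"
    using h_meas unfolding g_def set_borel_measurable_def by simp
  define f where "f x t = c * (ennreal (ramp (g x) t) * indicator A x) * indicator {0<..} t" for x t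
  have f_meas: "case_prod f \<in> borel_measurable (M \<Otimes>\<^sub>M lborel)"
    using A unfolding f_def ramp_def by measurable
  have ramp_meas: "(\<lambda>x. ennreal (ramp (g x) t) * indicator A x) \<in> borel_measurable M" for t
    using A unfolding ramp_def by measurable
  have "(\<integral>\<^sup>+t\<in>{0<..}. c * (\<integral>\<^sup>+x\<in>A. ennreal (ramp (h x) t) \<partial>M) \<partial>lborel)
      = (\<integral>\<^sup>+t. (\<integral>\<^sup>+x. f x t \<partial>M) \<partial>lborel)"
  proof (rule nn_integral_cong)
    fix t
    have "(\<integral>\<^sup>+x\<in>A. ennreal (ramp (h x) t) \<partial>M) = (\<integral>\<^sup>+x\<in>A. ennreal (ramp (g x) t) \<partial>M)"
      by (intro nn_integral_cong) (simp add: g_def split: split_indicator)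
    then show "c * (\<integral>\<^sup>+x\<in>A. ennreal (ramp (h x) t) \<partial>M) * indicator {0<..} t = (\<integral>\<^sup>+x. f x t \<partial>M)"
      unfolding f_def using ramp_meas by (simp add: nn_integral_cmult nn_integral_multc)
  qed
  also have "\<dots> = (\<integral>\<^sup>+x. (\<integral>\<^sup>+t. f x t \<partial>lborel) \<partial>M)"
    by (rule Fubini'[OF f_meas])
  also have "\<dots> = (\<integral>\<^sup>+x. c * (ennreal (g x) * indicator A x) \<partial>M)"
  proof (rule nn_integral_cong)
    fix x
    show "(\<integral>\<^sup>+t. f x t \<partial>lborel) = c * (ennreal (g x) * indicator A x)"
    proof (cases "x \<in> A")
      case True
      have "(\<integral>\<^sup>+t. f x t \<partial>lborel) = c * (\<integral>\<^sup>+t\<in>{0<..}. ennreal (ramp (h x) t) \<partial>lborel)"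
        using True unfolding f_def g_def ramp_def by (simp add: nn_integral_cmult mult.assoc)
      also have "\<dots> = c * ennreal (g x)"
        using True pos by (simp add: nn_integral_ramp g_def)
      finally show ?thesis using True by simp
    qed (simp add: f_def)
  qed
  also have "\<dots> = c * (\<integral>\<^sup>+x. ennreal (g x) * indicator A x \<partial>M)"
    by (rule nn_integral_cmult) (use A in measurable)
  also have "(\<integral>\<^sup>+x. ennreal (g x) * indicator A x \<partial>M) = (\<integral>\<^sup>+x\<in>A. ennreal (h x) \<partial>M)"
    by (intro nn_integral_cong) (simp add: g_def split: split_indicator)
  finally show ?thesis .
qed

lemma superlevel_inverse_averages_le:
  assumes af: "atomic_filtration M S" and I0: "I0 \<in> dyad M S"
    and pos: "\<forall>x\<in>I0. 0 < h x" and h_meas: "set_borel_measurable M I0 h"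
    and inv: "set_integrable M I0 (\<lambda>x. 1 / h x)" and t: "0 < t"
    and H: "\<And>I. H I = (if I \<in> tree M S I0 then complex_of_real (1 / avg M (\<lambda>x. 1 / h x) I) else 0)"
  shows "superlevel M S H t \<le> 2 * (\<integral>\<^sup>+x\<in>I0. ennreal (ramp (h x) t) \<partial>M)"
proof -
  define G where "G = {I \<in> tree M S I0. t < norm (H I)}"
  have "superlevel M S H t \<le> (SUP K \<in> {K. finite K \<and> K \<subseteq> maximal_sets G}. \<Sum>I\<in>K. emeasure M I)"
    unfolding G_def by (rule superlevel_le_sum_maximal_sets[OF af I0]) (use t H in simp)
  also have "\<dots> \<le> 2 * (\<integral>\<^sup>+x\<in>I0. ennreal (ramp (h x) t) \<partial>M)"
  proof (rule SUP_least, clarify)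
    fix K assume K: "finite K" "K \<subseteq> maximal_sets G"
    have I_tree: "I \<in> tree M S I0" and I_big: "t < norm (H I)" if "I \<in> K" for I
      using that K(2) unfolding maximal_sets_def G_def by blast+
    have I_dyad: "I \<in> dyad M S" and I_sub: "I \<subseteq> I0" if "I \<in> K" for I
      using I_tree[OF that] unfolding tree_def by blast+
    have disjoint: "disjoint K"
      using disjoint_maximal_sets[OF af, of G] K(2) unfolding G_def tree_def
      by (auto simp: disjoint_def)
    have "(\<Sum>I\<in>K. emeasure M I) \<le> (\<Sum>I\<in>K. 2 * (\<integral>\<^sup>+x\<in>I. ennreal (ramp (h x) t) \<partial>M))"
    proof (rule sum_mono)
      fix I assume I: "I \<in> K"
      note I_sets = dyadD(1)[OF af I_dyad[OF I]]
      show "emeasure M I \<le> 2 * (\<integral>\<^sup>+x\<in>I. ennreal (ramp (h x) t) \<partial>M)"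
      proof (rule emeasure_le_twice_ramp_integral)
        show "set_borel_measurable M I h"
          by (rule set_borel_measurable_subset[OF h_meas I_sets I_sub[OF I]])
        show "set_integrable M I (\<lambda>x. 1 / h x)"
          by (rule set_integrable_subset[OF inv I_sets I_sub[OF I]])
        show "t < \<bar>1 / avg M (\<lambda>x. 1 / h x) I\<bar>"
          using I_big[OF I] I_tree[OF I] by (simp add: H norm_divide)
      qed (use I_sets dyadD(2)[OF af I_dyad[OF I]] pos I_sub[OF I] t in auto)
    qed
    also have "\<dots> = 2 * (\<Sum>I\<in>K. \<integral>\<^sup>+x\<in>I. ennreal (ramp (h x) t) \<partial>M)"
      by (simp add: sum_distrib_left)
    also have "\<dots> \<le> 2 * (\<integral>\<^sup>+x\<in>I0. ennreal (ramp (h x) t) \<partial>M)"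
    proof (intro mult_left_mono sum_set_nn_integral_le)
      show "(\<lambda>x. ennreal (ramp (h x) t) * indicator I0 x) \<in> borel_measurable M"
        by (rule set_borel_measurable_compose_ennreal[OF h_meas dyadD(1)[OF af I0]])
           (simp add: ramp_def)
    qed (use K(1) disjoint dyadD(1)[OF af I_dyad] I_sub in auto)
    finally show "(\<Sum>I\<in>K. emeasure M I) \<le> 2 * (\<integral>\<^sup>+x\<in>I0. ennreal (ramp (h x) t) \<partial>M)" .
  qed
  finally show ?thesis .
qed

theorem lemma4p2:
  fixes M :: "'a measure" and S :: "int \<Rightarrow> 'a set set"
    and I0 :: "'a set" and h :: "'a \<Rightarrow> real" and H :: "'a set \<Rightarrow> complex"
  assumes "atomic_filtration M S"
    and "I0 \<in> dyad M S"
    and "\<forall>x\<in>I0. h x > 0"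
    and "set_integrable M I0 h"
    and "set_integrable M I0 (\<lambda>x. 1 / h x)"
    and "\<And>I. H I = (if I \<in> tree M S I0 then complex_of_real (1 / avg M (\<lambda>x. 1 / h x) I) else 0)"
  shows "H \<in> outer_Lp 1 M S \<and>
         outer_Lp_norm 1 M S H \<le> ennreal (2 * (LINT x:I0|M. \<bar>h x\<bar>))"
proof (rule outer_Lp_1_le)
  note af = assms(1) and I0 = assms(2) and pos = assms(3) and h_int = assms(4)
  have I0_sets: "I0 \<in> sets M" by (rule dyadD(1)[OF af I0])
  have h_meas: "set_borel_measurable M I0 h"
    unfolding set_borel_measurable_def
    by (rule borel_measurable_integrable[OF h_int[unfolded set_integrable_def]])
  have sigma_finite: "sigma_finite_measure M"
    using af unfolding atomic_filtration_def by (rule conjunct1)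
  have "outer_Lp_integral 1 M S H = (\<integral>\<^sup>+t\<in>{0<..}. superlevel M S H t \<partial>lborel)"
    by (rule outer_Lp_integral_1)
  also have "\<dots> \<le> (\<integral>\<^sup>+t\<in>{0<..}. 2 * (\<integral>\<^sup>+x\<in>I0. ennreal (ramp (h x) t) \<partial>M) \<partial>lborel)"
  proof (rule nn_integral_mono)
    fix t :: real
    show "superlevel M S H t * indicator {0<..} t
        \<le> 2 * (\<integral>\<^sup>+x\<in>I0. ennreal (ramp (h x) t) \<partial>M) * indicator {0<..} t"
      using superlevel_inverse_averages_le[OF af I0 pos h_meas assms(5) _ assms(6), of t]
      by (cases "0 < t") simp_all
  qed
  also have "\<dots> = 2 * (\<integral>\<^sup>+x\<in>I0. ennreal (h x) \<partial>M)"
    by (rule nn_integral_ramp_layers[OF sigma_finite I0_sets h_meas pos])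
  also have "(\<integral>\<^sup>+x\<in>I0. ennreal (h x) \<partial>M) = (\<integral>\<^sup>+x\<in>I0. ennreal \<bar>h x\<bar> \<partial>M)"
    using pos by (intro nn_integral_cong) (auto split: split_indicator simp: abs_of_pos)
  also have "\<dots> = ennreal (LINT x:I0|M. \<bar>h x\<bar>)"
    by (rule set_nn_integral_eq_set_integral[OF set_integrable_abs[OF h_int]]) simp
  also have "2 * \<dots> = ennreal (2 * (LINT x:I0|M. \<bar>h x\<bar>))"
    by (simp add: ennreal_mult')
  finally show "outer_Lp_integral 1 M S H \<le> ennreal (2 * (LINT x:I0|M. \<bar>h x\<bar>))" .
qed

end
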